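(* Let $\mu$ be a Borel probability measure satisfying Assumption A (see context) and let $t>1$. Then $\mathrm{Re}\,\omega_t$ is strictly increasing on the real line and $\mathrm{Re}\,\omega_t'(z)\ge\frac12$ for every $z\in\mathbb{C}^+$. Moreover $\omega_t$ is a homeomorphism of $\mathbb{C}^+\cup\mathbb{R}$ onto its image and is biholomorphic on $\mathbb{C}^+\cup\mathbb{R}\setminus\mathrm{supp}(\mu^{\boxplus t})$.
   Context: Assumption A: $n_{\mathrm{ac}},n_{\mathrm{pp}},n^{\mathrm{out}}_{\mathrm{pp}}\ge1$ integers; $\mu$ is a compactly supported Borel probability measure on $\mathbb{R}$ whose singular part is supported on a finite set $\{x_1,\dots,x_{n_{\mathrm{pp}}}\}$, whose absolutely continuous part $\mu_{\mathrm{ac}}$ is supported on $n_{\mathrm{ac}}$ intervals $[E_j^-,E_j^+]$, with exactly $n^{\mathrm{out}}_{\mathrm{pp}}$ atoms outside $\mathrm{supp}(\mu_{\mathrm{ac}})$, no atom at the endpoints $E_j^\pm$, and density $\rho$ with $C_j^{-1}<\rho(x)/\big((x-E_j^-)^{t_j^-}(E_j^+-x)^{t_j^+}\big)<C_j$ a.e. on $[E_j^-,E_j^+]$ for some $-1<t_j^\pm<1$, $C_j\ge1$. $m_\nu(z)=\int\frac{1}{x-z}\nu(dx)$, $F_\nu=-1/m_\nu$. For $t\ge1$, $\omega_t:\mathbb{C}^+\to\mathbb{C}^+$ is the analytic subordination function with $\mathrm{Im}\,\omega_t(z)\ge\mathrm{Im}\,z$, $\omega_t(i\eta)/(i\eta)\to1$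 as $\eta\to\infty$, and $t\omega_t(z)-z=(t-1)F_\mu(\omega_t(z))$; $\mu^{\boxplus t}$ is the probability measure with $F_{\mu^{\boxplus t}}=F_\mu\circ\omega_t$. For $t>1$, $\omega_t$ extends continuously to $\mathbb{C}^+\cup\mathbb{R}$ (with values in $\mathbb{C}^+\cup\mathbb{R}\cup\{\infty\}$), and $\omega_t$ on $\mathbb{R}$ denotes this extension. *)

theory Defs
  imports "HOL-Probability.Probability" "HOL-Complex_Analysis.Complex_Analysis"
begin

definition msupp :: "real measure \<Rightarrow> real set" where
  "msupp \<nu> = {x. \<forall>e>0. emeasure \<nu> {x - e <..< x + e} > 0}"

definition stieltjes :: "real measure \<Rightarrow> complex \<Rightarrow> complex" where
  "stieltjes \<nu> z = integral\<^sup>L \<nu> (\<lambda>x. 1 / (complex_of_real x - z))"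

definition Ftrans :: "real measure \<Rightarrow> complex \<Rightarrow> complex" where
  "Ftrans \<nu> z = - 1 / stieltjes \<nu> z"

definition UHP :: "complex set" where
  "UHP = {z. Im z > 0}"

definition assumption_A :: "real measure \<Rightarrow> nat \<Rightarrow> nat \<Rightarrow> nat \<Rightarrow> bool" where
  "assumption_A \<mu> n_ac n_pp n_out \<longleftrightarrow>
     n_ac \<ge> 1 \<and> n_pp \<ge> 1 \<and> n_out \<ge> 1 \<and>
     prob_space \<mu> \<and> sets \<mu> = sets borel \<and>
     (\<exists>K. compact K \<and> emeasure \<mu> (UNIV - K) = 0) \<and>
     (\<exists>(Em :: nat \<Rightarrow> real) (Ep :: nat \<Rightarrow> real) (tm :: nat \<Rightarrow> real) (tp :: nat \<Rightarrow> real)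
        (C :: nat \<Rightarrow> real) (\<rho> :: real \<Rightarrow> real) (X :: real set) (w :: real \<Rightarrow> real).
        (\<forall>j<n_ac. Em j < Ep j) \<and>
        (\<forall>j. Suc j < n_ac \<longrightarrow> Ep j < Em (Suc j)) \<and>
        finite X \<and> card X = n_pp \<and> (\<forall>x\<in>X. w x > 0) \<and>
        \<rho> \<in> borel_measurable borel \<and> (\<forall>x. \<rho> x \<ge> 0) \<and>
        (\<forall>x. (\<forall>j<n_ac. x \<notin> {Em j .. Ep j}) \<longrightarrow> \<rho> x = 0) \<and>
        (\<forall>A\<in>sets borel. emeasure \<mu> A =
            (\<integral>\<^sup>+ x. ennreal (\<rho> x) * indicator A x \<partial>lborel)
            + (\<Sum>x\<in>X. ennreal (w x) * indicator A x)) \<and>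
        (\<forall>j<n_ac. -1 < tm j \<and> tm j < 1 \<and> -1 < tp j \<and> tp j < 1 \<and> C j \<ge> 1 \<and>
           (AE x in lborel. x \<in> {Em j <..< Ep j} \<longrightarrow>
              1 / C j < \<rho> x / ((x - Em j) powr tm j * (Ep j - x) powr tp j) \<and>
              \<rho> x / ((x - Em j) powr tm j * (Ep j - x) powr tp j) < C j)) \<and>
        card {x\<in>X. x \<notin> msupp (density lborel (\<lambda>x. ennreal (\<rho> x)))} = n_out \<and>
        (\<forall>j<n_ac. Em j \<notin> X \<and> Ep j \<notin> X))"

end

theory Submission
  imports Defs
begin

text \<open>
  Put \<open>w\<^sub>j = \<omega> z\<^sub>j\<close>, \<open>m\<^sub>j = m\<^sub>\<mu>(w\<^sub>j)\<close> and \<open>k\<^sub>j(x) = 1/(x - w\<^sub>j)\<close>.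
  Subtracting the subordination equations
  \<open>z\<^sub>j = t w\<^sub>j + (t - 1)/m\<^sub>j\<close> and using the resolvent identity
  \<open>E[k\<^sub>1 k\<^sub>2] = (m\<^sub>1 - m\<^sub>2)/(w\<^sub>1 - w\<^sub>2)\<close> gives
  \<open>(z\<^sub>1 - z\<^sub>2)/(w\<^sub>1 - w\<^sub>2) - 1 = (t - 1) (m\<^sub>1 m\<^sub>2 - E[k\<^sub>1 k\<^sub>2]) / (m\<^sub>1 m\<^sub>2)\<close>.
  The numerator is a covariance, bounded by Cauchy-Schwarz through the variances
  \<open>Var k\<^sub>j = Im m\<^sub>j / Im w\<^sub>j - |m\<^sub>j|\<^sup>2\<close>, and the imaginary part of the
  subordination equation shows \<open>(t - 1) Var k\<^sub>j < |m\<^sub>j|\<^sup>2\<close>. Hence the right-hand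
  side has modulus \<open>< 1\<close>, i.e. \<open>Re ((w\<^sub>1 - w\<^sub>2)/(z\<^sub>1 - z\<^sub>2)) > 1/2\<close>.
  By continuity \<open>|z\<^sub>1 - z\<^sub>2|\<^sup>2 \<le> 2 Re ((\<omega> z\<^sub>1 - \<omega> z\<^sub>2) (z\<^sub>1 - z\<^sub>2)\<^sup>*)\<close> on the
  closed half-plane, which yields the monotonicity on \<open>\<real>\<close>, the bound on \<open>\<omega>'\<close> and a
  Lipschitz inverse. Near a gap of \<open>\<nu>\<close> one has
  \<open>Im \<omega> \<le> Im F\<^sub>\<nu> = Im m\<^sub>\<nu> |F\<^sub>\<nu>|\<^sup>2\<close> with \<open>Im m\<^sub>\<nu>(x + ib) = O(b)\<close> and \<open>F\<^sub>\<nu>\<close>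
  bounded, so \<open>\<omega>\<close> is real there and Schwarz reflection continues it to an injective
  holomorphic map across the gap.
\<close>

lemma Re_inverse_gt_half:
  fixes a :: complex
  assumes "cmod (a - 1) < 1"
  shows "Re (1 / a) > 1 / 2"
proof -
  have "a \<noteq> 0" using assms by auto
  have "(Re a - 1)^2 + (Im a)^2 < 1"
    using assms by (simp add: cmod_def power_less_one_iff)
  then have "(Re a)^2 + (Im a)^2 < 2 * Re a" by (simp add: power2_eq_square algebra_simps)
  moreover have "(Re a)^2 + (Im a)^2 > 0"
    using \<open>a \<noteq> 0\<close> by (simp add: complex_eq_iff sum_power2_gt_zero_iff)
  ultimately show ?thesis by (simp add: Re_divide field_simps)
qed

lemma weighted_AM_GM:
  fixes a b l :: real
  assumes "l > 0"
  shows "a * b \<le> (l * a^2 + b^2 / l) / 2"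
proof -
  have "2 * l * (a * b) \<le> l * (l * a^2) + b^2"
    using zero_le_power2[of "l * a - b"] by (simp add: power2_eq_square algebra_simps)
  then show ?thesis using assms by (simp add: field_simps power2_eq_square)
qed

lemma (in prob_space) expectation_cmod_centered_squared:
  fixes f :: "'a \<Rightarrow> complex"
  assumes f: "integrable M f" and f2: "integrable M (\<lambda>x. (cmod (f x))^2)"
  shows "integrable M (\<lambda>x. (cmod (f x - expectation f))^2)"
    and "expectation (\<lambda>x. (cmod (f x - expectation f))^2)
           = expectation (\<lambda>x. (cmod (f x))^2) - (cmod (expectation f))^2"
proof -
  let ?m = "expectation f"
  have expand: "(\<lambda>x. (cmod (f x - ?m))^2)
      = (\<lambda>x. (cmod (f x))^2 - 2 * Re (f x * cnj ?m) + (cmod ?m)^2)"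
    unfolding cmod_power2 by (simp add: power2_eq_square algebra_simps)
  have "expectation (\<lambda>x. Re (f x * cnj ?m)) = Re (?m * cnj ?m)"
    using f by simp
  also have "\<dots> = (cmod ?m)^2"
    by (simp only: complex_mult_cnj Re_complex_of_real cmod_power2)
  finally have cross: "expectation (\<lambda>x. Re (f x * cnj ?m)) = (cmod ?m)^2" .
  show "integrable M (\<lambda>x. (cmod (f x - ?m))^2)"
    unfolding expand using f f2 by auto
  show "expectation (\<lambda>x. (cmod (f x - ?m))^2) = expectation (\<lambda>x. (cmod (f x))^2) - (cmod ?m)^2"
    unfolding expand using f f2 cross by (simp add: prob_space)
qed

lemma (in prob_space) cmod_covariance_le:
  fixes f g :: "'a \<Rightarrow> complex"
  assumes f: "integrable M f" "integrable M (\<lambda>x. (cmod (f x))^2)"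
    and g: "integrable M g" "integrable M (\<lambda>x. (cmod (g x))^2)"
    and fg: "integrable M (\<lambda>x. f x * g x)" and l: "l > 0"
  shows "cmod (expectation (\<lambda>x. f x * g x) - expectation f * expectation g)
    \<le> (l * expectation (\<lambda>x. (cmod (f x - expectation f))^2)
        + expectation (\<lambda>x. (cmod (g x - expectation g))^2) / l) / 2"
proof -
  let ?F = "\<lambda>x. f x - expectation f" and ?G = "\<lambda>x. g x - expectation g"
  have expand: "(\<lambda>x. ?F x * ?G x)
      = (\<lambda>x. f x * g x - f x * expectation g - g x * expectation f + expectation f * expectation g)"
    by (simp add: algebra_simps)
  have icov: "integrable M (\<lambda>x. ?F x * ?G x)"
    unfolding expand using f g fg by auto
  have "expectation (\<lambda>x. f x * g x) - expectation f * expectation g = expectation (\<lambda>x. ?F x * ?G x)"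
    unfolding expand using f g fg by (simp add: prob_space)
  also have "cmod \<dots> \<le> expectation (\<lambda>x. cmod (?F x * ?G x))"
    by (rule integral_norm_bound)
  also have "\<dots> \<le> expectation (\<lambda>x. (l * (cmod (?F x))^2 + (cmod (?G x))^2 / l) / 2)"
  proof (rule integral_mono)
    show "cmod (?F x * ?G x) \<le> (l * (cmod (?F x))^2 + (cmod (?G x))^2 / l) / 2" for x
      unfolding norm_mult by (rule weighted_AM_GM[OF l])
  qed (use integrable_norm[OF icov] expectation_cmod_centered_squared(1)[OF f]
        expectation_cmod_centered_squared(1)[OF g] in auto)
  also have "\<dots> = (l * expectation (\<lambda>x. (cmod (?F x))^2) + expectation (\<lambda>x. (cmod (?G x))^2) / l) / 2"
    using expectation_cmod_centered_squared(1)[OF f] expectation_cmod_centered_squared(1)[OF g]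
    by simp
  finally show ?thesis .
qed

lemma stieltjes_kernel_integrable:
  fixes M :: "real measure"
  assumes "finite_measure M" "sets M = sets borel" "Im w > 0"
  shows "integrable M (\<lambda>x. 1 / (complex_of_real x - w))"
proof (rule finite_measure.integrable_const_bound[OF assms(1)])
  show "AE x in M. cmod (1 / (complex_of_real x - w)) \<le> 1 / Im w"
    using abs_Im_le_cmod[of "complex_of_real _ - w"] assms(3)
    by (intro AE_I2) (simp add: norm_divide divide_simps)
  show "(\<lambda>x. 1 / (complex_of_real x - w)) \<in> borel_measurable M"
    using assms(2) by (simp add: measurable_cong_sets[OF assms(2) refl])
qed

lemma cmod_stieltjes_kernel_squared:
  assumes "Im w > 0"
  shows "(cmod (1 / (complex_of_real x - w)))^2 = Im (1 / (complex_of_real x - w)) / Im w"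
proof -
  have pos: "(x - Re w)^2 + (Im w)^2 > 0" using assms by (simp add: add_nonneg_pos)
  have "(cmod (complex_of_real x - w))^2 = (x - Re w)^2 + (Im w)^2" by (simp add: cmod_power2)
  then show ?thesis
    using pos assms by (simp add: Im_divide norm_divide power_divide)
qed

lemma stieltjes_variance:
  fixes M :: "real measure"
  assumes M: "prob_space M" "sets M = sets borel" and w: "Im w > 0"
  defines "k \<equiv> \<lambda>x. 1 / (complex_of_real x - w)"
  shows "integral\<^sup>L M (\<lambda>x. (cmod (k x - stieltjes M w))^2)
           = Im (stieltjes M w) / Im w - (cmod (stieltjes M w))^2"
proof -
  interpret prob_space M by fact
  have k: "integrable M k"
    unfolding k_def using M w by (intro stieltjes_kernel_integrable) (auto intro: finite_measure)
  have k2: "(\<lambda>x. (cmod (k x))^2) = (\<lambda>x. Im (k x) / Im w)"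
    unfolding k_def using w by (simp add: cmod_stieltjes_kernel_squared)
  have m: "stieltjes M w = expectation k"
    unfolding stieltjes_def k_def ..
  show ?thesis
    unfolding m using k k2 by (subst expectation_cmod_centered_squared) auto
qed

lemma stieltjes_resolvent:
  fixes M :: "real measure"
  assumes M: "finite_measure M" "sets M = sets borel"
    and w: "Im w1 > 0" "Im w2 > 0" "w1 \<noteq> w2"
  defines "k \<equiv> \<lambda>w x. 1 / (complex_of_real x - w)"
  shows "integrable M (\<lambda>x. k w1 x * k w2 x)"
    and "integral\<^sup>L M (\<lambda>x. k w1 x * k w2 x) = (stieltjes M w1 - stieltjes M w2) / (w1 - w2)"
proof -
  have ne: "complex_of_real x - w \<noteq> 0" if "Im w > 0" for x w
    using that by (auto simp: complex_eq_iff)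
  have resolvent: "(\<lambda>x. k w1 x * k w2 x) = (\<lambda>x. (k w1 x - k w2 x) / (w1 - w2))"
  proof
    fix x
    have "k w1 x - k w2 x = (w1 - w2) / ((complex_of_real x - w1) * (complex_of_real x - w2))"
      unfolding k_def using ne[OF w(1)] ne[OF w(2)] by (simp add: diff_frac_eq)
    then show "k w1 x * k w2 x = (k w1 x - k w2 x) / (w1 - w2)"
      using w(3) by (simp add: k_def)
  qed
  have int: "integrable M (k w1)" "integrable M (k w2)"
    unfolding k_def using M w by (auto intro: stieltjes_kernel_integrable)
  show "integrable M (\<lambda>x. k w1 x * k w2 x)"
    unfolding resolvent using int by auto
  show "integral\<^sup>L M (\<lambda>x. k w1 x * k w2 x) = (stieltjes M w1 - stieltjes M w2) / (w1 - w2)"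
  proof -
    have "integral\<^sup>L M (\<lambda>x. (k w1 x - k w2 x) / (w1 - w2))
        = (integral\<^sup>L M (k w1) - integral\<^sup>L M (k w2)) / (w1 - w2)"
      using int by simp
    then show ?thesis unfolding resolvent by (simp only: stieltjes_def k_def)
  qed
qed

lemma cmod_stieltjes_covariance_le:
  fixes M :: "real measure"
  assumes M: "prob_space M" "sets M = sets borel"
    and w: "Im w1 > 0" "Im w2 > 0" "w1 \<noteq> w2" and l: "l > 0"
  shows "cmod ((stieltjes M w1 - stieltjes M w2) / (w1 - w2) - stieltjes M w1 * stieltjes M w2)
    \<le> (l * (Im (stieltjes M w1) / Im w1 - (cmod (stieltjes M w1))^2)
        + (Im (stieltjes M w2) / Im w2 - (cmod (stieltjes M w2))^2) / l) / 2"
proof -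
  interpret prob_space M by fact
  define k where "k = (\<lambda>w x. 1 / (complex_of_real x - w))"
  have k_int: "integrable M (k w)" "integrable M (\<lambda>x. (cmod (k w x))^2)" if "Im w > 0" for w
    using stieltjes_kernel_integrable[OF finite_measure M(2) that]
      cmod_stieltjes_kernel_squared[OF that] unfolding k_def by auto
  have m: "expectation (k w) = stieltjes M w" for w
    unfolding stieltjes_def k_def ..
  have P: "integrable M (\<lambda>x. k w1 x * k w2 x)"
    "expectation (\<lambda>x. k w1 x * k w2 x) = (stieltjes M w1 - stieltjes M w2) / (w1 - w2)"
    unfolding k_def using stieltjes_resolvent[OF finite_measure M(2) w] by auto
  have V: "expectation (\<lambda>x. (cmod (k w x - stieltjes M w))^2)
      = Im (stieltjes M w) / Im w - (cmod (stieltjes M w))^2" if "Im w > 0" for w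
    using stieltjes_variance[OF M that] unfolding k_def .
  show ?thesis
    using cmod_covariance_le[OF k_int[OF w(1)] k_int[OF w(2)] P(1) l]
    unfolding P(2) m V[OF w(1)] V[OF w(2)] .
qed

lemma Im_Ftrans: "Im (Ftrans M w) = Im (stieltjes M w) * (cmod (Ftrans M w))^2"
  by (simp add: Ftrans_def Im_divide norm_divide power_divide cmod_power2)

lemma Im_stieltjes_le_if_null_interval:
  fixes \<nu> :: "real measure"
  assumes \<nu>: "prob_space \<nu>" "sets \<nu> = sets borel" and e: "e > 0"
    and null: "emeasure \<nu> {x - e <..< x + e} = 0" and b: "b > 0"
  shows "Im (stieltjes \<nu> (complex_of_real x + \<i> * complex_of_real b)) \<le> b / e^2"
proof -
  interpret prob_space \<nu> by fact
  define k where "k = (\<lambda>s. 1 / (complex_of_real s - (complex_of_real x + \<i> * complex_of_real b)))"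
  have k: "integrable \<nu> k"
    unfolding k_def using \<nu> b by (intro stieltjes_kernel_integrable) (auto intro: finite_measure)
  have outside: "AE s in \<nu>. s \<notin> {x - e <..< x + e}"
    using null \<nu>(2) by (intro AE_I'[where N="{x - e <..< x + e}"]) (auto simp: null_sets_def)
  have "Im (stieltjes \<nu> (complex_of_real x + \<i> * complex_of_real b)) = expectation (\<lambda>s. Im (k s))"
    unfolding stieltjes_def k_def[symmetric] using k by simp
  also have "\<dots> \<le> expectation (\<lambda>s. b / e^2)"
  proof (rule integral_mono_AE)
    show "AE s in \<nu>. Im (k s) \<le> b / e^2"
      using outside
    proof (rule eventually_mono)
      fix s assume "s \<notin> {x - e <..< x + e}"
      then have "e \<le> \<bar>s - x\<bar>" by auto
      then have "e^2 \<le> (s - x)^2" using e by (simp add: abs_le_square_iff[symmetric])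
      then have "e^2 \<le> (s - x)^2 + b^2" by (smt (verit) zero_le_power2)
      moreover have "Im (k s) = b / ((s - x)^2 + b^2)"
        unfolding k_def by (simp add: Im_divide power2_eq_square algebra_simps)
      ultimately show "Im (k s) \<le> b / e^2"
        using e b by (simp add: frac_le)
    qed
  qed (use k in auto)
  finally show ?thesis by (simp add: prob_space)
qed

lemma subordination_stieltjes_variance_lt:
  fixes M :: "real measure"
  assumes t: "t > 1" and z: "Im z > 0" "Im z \<le> Im w"
    and eq: "of_real t * w - z = of_real (t - 1) * Ftrans M w"
  shows "stieltjes M w \<noteq> 0"
    and "(t - 1) * (Im (stieltjes M w) / Im w - (cmod (stieltjes M w))^2) < (cmod (stieltjes M w))^2"
proof -
  let ?m = "stieltjes M w"
  have ImF: "(t - 1) * Im (Ftrans M w) = t * Im w - Im z"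
    using arg_cong[OF eq, of Im] by simp
  have "Im w < t * Im w" using t z by simp
  then have pos: "t * Im w - Im z > 0" using z by linarith
  show m: "?m \<noteq> 0"
    using ImF pos by (auto simp: Ftrans_def)
  have "(t - 1) * Im ?m = (cmod ?m)^2 * (t * Im w - Im z)"
    using ImF m unfolding Im_Ftrans by (simp add: Ftrans_def norm_divide power_divide field_simps)
  then have "(t - 1) * (Im ?m / Im w - (cmod ?m)^2) = (cmod ?m)^2 * (1 - Im z / Im w)"
    using z by (simp add: field_simps)
  also have "\<dots> < (cmod ?m)^2"
    using m z by (simp add: field_simps)
  finally show "(t - 1) * (Im ?m / Im w - (cmod ?m)^2) < (cmod ?m)^2" .
qed

lemma subordination_quotient_minus_one:
  fixes M :: "real measure" and t :: real and w1 w2 z1 z2 :: complex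
  defines "m1 \<equiv> stieltjes M w1" and "m2 \<equiv> stieltjes M w2"
  assumes ne: "w1 \<noteq> w2" "m1 \<noteq> 0" "m2 \<noteq> 0"
    and eq1: "of_real t * w1 - z1 = of_real (t - 1) * Ftrans M w1"
    and eq2: "of_real t * w2 - z2 = of_real (t - 1) * Ftrans M w2"
  shows "(z1 - z2) / (w1 - w2) - 1
    = of_real (t - 1) * (m1 * m2 - (m1 - m2) / (w1 - w2)) / (m1 * m2)"
proof -
  define P where "P = (m1 - m2) / (w1 - w2)"
  have z_eq: "z1 = of_real t * w1 - of_real (t - 1) * Ftrans M w1"
    "z2 = of_real t * w2 - of_real (t - 1) * Ftrans M w2"
    using eq1 eq2 by (simp_all add: algebra_simps)
  have "z1 - z2 = of_real t * (w1 - w2) - of_real (t - 1) * (Ftrans M w1 - Ftrans M w2)"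
    by (simp add: z_eq algebra_simps)
  also have "Ftrans M w1 - Ftrans M w2 = P * (w1 - w2) / (m1 * m2)"
    unfolding Ftrans_def P_def m1_def[symmetric] m2_def[symmetric] using ne by (simp add: field_simps)
  finally have "(z1 - z2) / (w1 - w2) - 1 = of_real (t - 1) * (m1 * m2 - P) / (m1 * m2)"
    using ne by (simp add: field_simps)
  then show ?thesis unfolding P_def .
qed

lemma Re_subordination_quotient_gt_half:
  fixes M :: "real measure"
  assumes M: "prob_space M" "sets M = sets borel" and t: "t > 1"
    and z: "Im z1 > 0" "Im z2 > 0" "z1 \<noteq> z2" and w: "Im z1 \<le> Im w1" "Im z2 \<le> Im w2"
    and eq1: "of_real t * w1 - z1 = of_real (t - 1) * Ftrans M w1"
    and eq2: "of_real t * w2 - z2 = of_real (t - 1) * Ftrans M w2"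
  shows "Re ((w1 - w2) / (z1 - z2)) > 1 / 2"
proof -
  define m1 m2 where "m1 = stieltjes M w1" and "m2 = stieltjes M w2"
  define P where "P = (m1 - m2) / (w1 - w2)"
  have m1: "m1 \<noteq> 0" "(t - 1) * (Im m1 / Im w1 - (cmod m1)^2) < (cmod m1)^2"
    unfolding m1_def using subordination_stieltjes_variance_lt[OF t z(1) w(1) eq1] by auto
  have m2: "m2 \<noteq> 0" "(t - 1) * (Im m2 / Im w2 - (cmod m2)^2) < (cmod m2)^2"
    unfolding m2_def using subordination_stieltjes_variance_lt[OF t z(2) w(2) eq2] by auto
  have "z1 = of_real t * w1 - of_real (t - 1) * Ftrans M w1"
    "z2 = of_real t * w2 - of_real (t - 1) * Ftrans M w2"
    using eq1 eq2 by (simp_all add: algebra_simps)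
  then have "w1 \<noteq> w2" using z(3) by auto
  define l where "l = cmod m2 / cmod m1"
  have l: "l > 0" unfolding l_def using m1 m2 by simp
  have "cmod (P - m1 * m2)
      \<le> (l * (Im m1 / Im w1 - (cmod m1)^2) + (Im m2 / Im w2 - (cmod m2)^2) / l) / 2"
    unfolding P_def m1_def m2_def using z w \<open>w1 \<noteq> w2\<close> l
    by (intro cmod_stieltjes_covariance_le[OF M]) auto
  then have "(t - 1) * cmod (P - m1 * m2)
      \<le> (t - 1) * ((l * (Im m1 / Im w1 - (cmod m1)^2) + (Im m2 / Im w2 - (cmod m2)^2) / l) / 2)"
    using t by simp
  also have "\<dots> = (l * ((t - 1) * (Im m1 / Im w1 - (cmod m1)^2))
                  + ((t - 1) * (Im m2 / Im w2 - (cmod m2)^2)) / l) / 2"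
    by (simp add: algebra_simps)
  also have "\<dots> < (l * (cmod m1)^2 + (cmod m2)^2 / l) / 2"
    using m1(2) m2(2) l by (intro divide_strict_right_mono add_strict_mono mult_strict_left_mono)
      (auto simp: divide_strict_right_mono)
  also have "\<dots> = cmod m1 * cmod m2"
    unfolding l_def using m1 m2 by (simp add: field_simps power2_eq_square)
  finally have cov: "(t - 1) * cmod (P - m1 * m2) < cmod m1 * cmod m2" .
  have "cmod ((z1 - z2) / (w1 - w2) - 1)
      = cmod (complex_of_real (t - 1)) * cmod (m1 * m2 - P) / cmod (m1 * m2)"
    unfolding subordination_quotient_minus_one[OF \<open>w1 \<noteq> w2\<close> m1(1)[unfolded m1_def]
        m2(1)[unfolded m2_def] eq1 eq2] m1_def[symmetric] m2_def[symmetric] P_def[symmetric]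
    by (simp only: norm_mult norm_divide)
  also have "\<dots> = (t - 1) * cmod (P - m1 * m2) / (cmod m1 * cmod m2)"
    using t by (simp add: norm_mult norm_minus_commute del: of_real_diff)
  also have "\<dots> < 1" using cov m1 m2 by simp
  finally show ?thesis using Re_inverse_gt_half by fastforce
qed

lemma open_UHP: "open UHP"
  unfolding UHP_def by (rule open_halfspace_Im_gt)

lemma UHP_Un_Reals: "UHP \<union> \<real> = {z. 0 \<le> Im z}"
  by (auto simp: UHP_def complex_is_Real_iff)

lemma closure_UHP: "closure UHP = UHP \<union> \<real>"
proof -
  have "closure {z::complex. \<i> \<bullet> z > 0} = {z. \<i> \<bullet> z \<ge> 0}"
    by (rule closure_halfspace_gt) simp
  then show ?thesis unfolding UHP_Un_Reals by (simp add: UHP_def)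
qed

lemma tendsto_vertical_shift:
  assumes f: "continuous_on (UHP \<union> \<real>) f" and z: "z \<in> UHP \<union> \<real>"
  shows "((\<lambda>b. f (z + \<i> * of_real b)) \<longlongrightarrow> f z) (at_right 0)"
proof -
  have "eventually (\<lambda>b::real. z + \<i> * of_real b \<in> UHP \<union> \<real>) (at_right 0)"
    using z by (simp add: eventually_at_right_field UHP_Un_Reals) (use zero_less_one in blast)
  moreover have "((\<lambda>b::real. z + \<i> * of_real b) \<longlongrightarrow> z) (at_right 0)"
    by (auto intro!: tendsto_eq_intros)
  ultimately have "filterlim (\<lambda>b::real. z + \<i> * of_real b) (at z within UHP \<union> \<real>) (at_right 0)"
    by (simp add: filterlim_at) (auto simp: eventually_at_right_field)
  moreover have "(f \<longlongrightarrow> f z) (at z within UHP \<union> \<real>)"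
    using f z by (simp add: continuous_on_def)
  ultimately show ?thesis
    by (rule filterlim_compose[rotated])
qed

lemma homeomorphism_inv_into_if_dist_le:
  assumes "continuous_on S f" and "\<And>x y. x \<in> S \<Longrightarrow> y \<in> S \<Longrightarrow> dist x y \<le> C * dist (f x) (f y)"
  shows "homeomorphism S (f ` S) f (inv_into S f)"
proof -
  have inj: "inj_on f S"
    using assms(2) by (fastforce intro: inj_onI)
  have "lipschitz_on (max C 0) (f ` S) (inv_into S f)"
  proof (rule lipschitz_onI)
    fix y y' assume "y \<in> f ` S" "y' \<in> f ` S"
    then obtain x x' where "x \<in> S" "x' \<in> S" "y = f x" "y' = f x'" by auto
    then show "dist (inv_into S f y) (inv_into S f y') \<le> max C 0 * dist y y'"
      using assms(2)[of x x'] inj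
      by (simp add: mult_right_mono order_trans[OF _ mult_right_mono[of C "max C 0"]])
  qed simp
  then have "continuous_on (f ` S) (inv_into S f)"
    by (rule lipschitz_on_continuous_on)
  then show ?thesis
    using assms(1) inj by (auto simp: homeomorphism_def)
qed

lemma closed_msupp:
  assumes "sets \<nu> = sets borel"
  shows "closed (msupp \<nu>)"
proof -
  have "open (- msupp \<nu>)"
  proof (rule Topological_Spaces.openI)
    fix x assume "x \<in> - msupp \<nu>"
    then obtain e where e: "e > 0" "emeasure \<nu> {x - e <..< x + e} = 0"
      by (auto simp: msupp_def not_gr_zero)
    have "y \<notin> msupp \<nu>" if y: "y \<in> {x - e <..< x + e}" for y
    proof -
      define d where "d = min (y - (x - e)) (x + e - y)"
      have "d > 0" "{y - d <..< y + d} \<subseteq> {x - e <..< x + e}"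
        using y by (auto simp: d_def)
      then have "emeasure \<nu> {y - d <..< y + d} = 0"
        using e(2) emeasure_mono[of "{y - d <..< y + d}" "{x - e <..< x + e}" \<nu>] assms by simp
      then show ?thesis using \<open>d > 0\<close> by (auto simp: msupp_def)
    qed
    then show "\<exists>T. open T \<and> x \<in> T \<and> T \<subseteq> - msupp \<nu>"
      using e(1) by (intro exI[of _ "{x - e <..< x + e}"]) auto
  qed
  then show ?thesis by (simp add: closed_def)
qed

locale subordination =
  fixes \<mu> \<nu> :: "real measure" and t :: real and \<omega> :: "complex \<Rightarrow> complex"
  assumes mu_prob: "prob_space \<mu>" and mu_sets: "sets \<mu> = sets borel"
    and t: "t > 1"
    and hol: "\<omega> holomorphic_on UHP"
    and Im_le_UHP: "\<And>z. z \<in> UHP \<Longrightarrow> Im z \<le> Im (\<omega> z)"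
    and subord: "\<And>z. z \<in> UHP \<Longrightarrow> of_real t * \<omega> z - z = of_real (t - 1) * Ftrans \<mu> (\<omega> z)"
    and cont: "continuous_on (UHP \<union> \<real>) \<omega>"
    and nu_prob: "prob_space \<nu>" and nu_sets: "sets \<nu> = sets borel"
    and nu_F: "\<And>z. z \<in> UHP \<Longrightarrow> Ftrans \<nu> z = Ftrans \<mu> (\<omega> z)"
begin

lemma Im_le_closed_UHP:
  assumes "z \<in> UHP \<union> \<real>"
  shows "Im z \<le> Im (\<omega> z)"
proof -
  have "continuous_on (closure UHP) (\<lambda>z. Im (\<omega> z) - Im z)"
    unfolding closure_UHP by (intro continuous_intros cont)
  then have "0 \<le> Im (\<omega> z) - Im z"
    using assms Im_le_UHP unfolding closure_UHP[symmetric]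
    by (intro continuous_ge_on_closure[of UHP "\<lambda>z. Im (\<omega> z) - Im z" z 0]) auto
  then show ?thesis by simp
qed

lemma Re_diff_quotient_gt_half:
  assumes "z1 \<in> UHP" "z2 \<in> UHP" "z1 \<noteq> z2"
  shows "Re ((\<omega> z1 - \<omega> z2) / (z1 - z2)) > 1 / 2"
  using assms by (intro Re_subordination_quotient_gt_half[OF mu_prob mu_sets t] Im_le_UHP subord)
    (auto simp: UHP_def)

(* Unlike the difference quotient, this product form is continuous on the diagonal,
   so it passes from the open to the closed half-plane. *)
lemma Re_diff_mult_cnj_ge:
  assumes "z1 \<in> UHP \<union> \<real>" "z2 \<in> UHP \<union> \<real>"
  shows "(cmod (z1 - z2))^2 / 2 \<le> Re ((\<omega> z1 - \<omega> z2) * cnj (z1 - z2))"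
proof -
  let ?f = "\<lambda>p. Re ((\<omega> (fst p) - \<omega> (snd p)) * cnj (fst p - snd p)) - (cmod (fst p - snd p))^2 / 2"
  have "?f p \<ge> 0" if "p \<in> UHP \<times> UHP" for p
  proof (cases "fst p = snd p")
    case False
    have "1 / 2 < Re ((\<omega> (fst p) - \<omega> (snd p)) / (fst p - snd p))"
      using that False by (intro Re_diff_quotient_gt_half) auto
    also have "\<dots> = Re ((\<omega> (fst p) - \<omega> (snd p)) * cnj (fst p - snd p)) / (cmod (fst p - snd p))^2"
      by (subst complex_div_cnj) (simp add: Re_divide_of_real)
    finally show ?thesis using False by (simp add: field_simps)
  qed simp
  moreover have "continuous_on ((UHP \<union> \<real>) \<times> (UHP \<union> \<real>)) (\<lambda>p. \<omega> (fst p))"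
    and "continuous_on ((UHP \<union> \<real>) \<times> (UHP \<union> \<real>)) (\<lambda>p. \<omega> (snd p))"
    by (auto intro!: continuous_on_compose2[OF cont] continuous_on_fst continuous_on_snd
        continuous_on_id)
  then have "continuous_on (closure (UHP \<times> UHP)) ?f"
    unfolding closure_Times closure_UHP by (intro continuous_intros) simp_all
  ultimately have "?f (z1, z2) \<ge> 0"
    using assms
    by (intro continuous_ge_on_closure[of "UHP \<times> UHP" ?f "(z1, z2)" 0])
      (simp_all add: closure_Times closure_UHP)
  then show ?thesis by simp
qed

lemma dist_le_dist_image:
  assumes "z1 \<in> UHP \<union> \<real>" "z2 \<in> UHP \<union> \<real>"
  shows "dist z1 z2 \<le> 2 * dist (\<omega> z1) (\<omega> z2)"
proof -
  have "(cmod (z1 - z2))^2 / 2 \<le> Re ((\<omega> z1 - \<omega> z2) * cnj (z1 - z2))"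
    using assms by (rule Re_diff_mult_cnj_ge)
  also have "\<dots> \<le> cmod (\<omega> z1 - \<omega> z2) * cmod (z1 - z2)"
    using complex_Re_le_cmod[of "(\<omega> z1 - \<omega> z2) * cnj (z1 - z2)"]
    by (simp only: norm_mult complex_mod_cnj)
  finally have le: "cmod (z1 - z2) * cmod (z1 - z2) \<le> 2 * cmod (\<omega> z1 - \<omega> z2) * cmod (z1 - z2)"
    by (simp add: power2_eq_square)
  show ?thesis
  proof (cases "z1 = z2")
    case False
    then show ?thesis
      using mult_right_le_imp_le[OF le] by (simp add: dist_norm)
  qed simp
qed

lemma strict_mono_Re_real: "strict_mono (\<lambda>x::real. Re (\<omega> (of_real x)))"
proof (rule strict_monoI)
  fix x y :: real assume "x < y"
  have "(y - x)^2 / 2 \<le> Re ((\<omega> (of_real y) - \<omega> (of_real x)) * cnj (of_real y - of_real x))"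
    using Re_diff_mult_cnj_ge[of "of_real y" "of_real x"] by (simp flip: of_real_diff)
  also have "\<dots> = (y - x) * Re (\<omega> (of_real y) - \<omega> (of_real x))"
    by (simp flip: of_real_diff)
  finally have "(y - x) * ((y - x) / 2) \<le> (y - x) * Re (\<omega> (of_real y) - \<omega> (of_real x))"
    by (simp add: power2_eq_square)
  then have "(y - x) / 2 \<le> Re (\<omega> (of_real y) - \<omega> (of_real x))"
    using \<open>x < y\<close> by simp
  then show "Re (\<omega> (of_real x)) < Re (\<omega> (of_real y))"
    using \<open>x < y\<close> by simp
qed

lemma Re_deriv_ge:
  assumes z: "z \<in> UHP"
  shows "Re (deriv \<omega> z) \<ge> 1 / 2"
proof -
  have "(\<omega> has_field_derivative deriv \<omega> z) (at z)"
    using holomorphic_derivI[OF hol open_UHP z] .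
  then have "((\<lambda>y. Re ((\<omega> y - \<omega> z) / (y - z))) \<longlongrightarrow> Re (deriv \<omega> z)) (at z)"
    by (intro tendsto_Re) (simp add: has_field_derivative_iff)
  moreover have "eventually (\<lambda>y. 1 / 2 \<le> Re ((\<omega> y - \<omega> z) / (y - z))) (at z)"
    using eventually_at_in_open[OF open_UHP z]
    by eventually_elim (use z Re_diff_quotient_gt_half in force)
  ultimately show ?thesis by (rule tendsto_lowerbound) simp
qed

lemma homeomorphism_closed_UHP:
  "homeomorphism (UHP \<union> \<real>) (\<omega> ` (UHP \<union> \<real>)) \<omega> (inv_into (UHP \<union> \<real>) \<omega>)"
  using cont dist_le_dist_image by (rule homeomorphism_inv_into_if_dist_le)

lemma inj_on_closed_UHP: "inj_on \<omega> (UHP \<union> \<real>)"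
proof (rule inj_onI)
  fix z1 z2 assume "z1 \<in> UHP \<union> \<real>" "z2 \<in> UHP \<union> \<real>" "\<omega> z1 = \<omega> z2"
  then show "z1 = z2" using dist_le_dist_image[of z1 z2] by simp
qed

lemma Ftrans_nu_eq:
  assumes "z \<in> UHP"
  shows "Ftrans \<nu> z = (of_real t * \<omega> z - z) / of_real (t - 1)"
  unfolding subord[OF assms] nu_F[OF assms] using t by simp

lemma Im_le_Im_Ftrans_nu:
  assumes "z \<in> UHP"
  shows "Im (\<omega> z) \<le> Im (Ftrans \<nu> z)"
proof -
  have "(t - 1) * Im (Ftrans \<nu> z) = t * Im (\<omega> z) - Im z"
    using arg_cong[OF subord[OF assms], of Im] nu_F[OF assms] by simp
  then have "(t - 1) * Im (\<omega> z) \<le> (t - 1) * Im (Ftrans \<nu> z)"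
    using Im_le_UHP[OF assms] by (simp add: left_diff_distrib)
  then show ?thesis using t by simp
qed

lemma Im_nonpos_outside_support:
  assumes "x \<notin> msupp \<nu>"
  shows "Im (\<omega> (of_real x)) \<le> 0"
proof -
  obtain e where e: "e > 0" "emeasure \<nu> {x - e <..< x + e} = 0"
    using assms by (auto simp: msupp_def not_gr_zero)
  define z where "z = (\<lambda>b::real. complex_of_real x + \<i> * of_real b)"
  define F where "F = (\<lambda>b. (of_real t * \<omega> (z b) - z b) / of_real (t - 1))"
  have bound: "Im (\<omega> (z b)) \<le> b / e^2 * (cmod (F b))^2" if b: "b > 0" for b
  proof -
    have zU: "z b \<in> UHP" using b by (simp add: z_def UHP_def)
    have "Im (\<omega> (z b)) \<le> Im (stieltjes \<nu> (z b)) * (cmod (Ftrans \<nu> (z b)))^2"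
      using Im_le_Im_Ftrans_nu[OF zU] by (simp only: Im_Ftrans)
    also have "\<dots> \<le> b / e^2 * (cmod (F b))^2"
      using Im_stieltjes_le_if_null_interval[OF nu_prob nu_sets e b]
      unfolding Ftrans_nu_eq[OF zU] F_def by (intro mult_right_mono) (simp_all add: z_def)
    finally show ?thesis .
  qed
  have lim_\<omega>: "((\<lambda>b. \<omega> (z b)) \<longlongrightarrow> \<omega> (of_real x)) (at_right 0)"
    unfolding z_def by (rule tendsto_vertical_shift[OF cont]) simp
  have "(z \<longlongrightarrow> of_real x + \<i> * of_real 0) (at_right 0)"
    unfolding z_def by (intro tendsto_intros)
  then have lim_z: "(z \<longlongrightarrow> of_real x) (at_right 0)" by simp
  have "((\<lambda>b. b / e^2 * (cmod (F b))^2)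
      \<longlongrightarrow> 0 / e^2 * (cmod ((of_real t * \<omega> (of_real x) - of_real x) / of_real (t - 1)))^2)
      (at_right 0)"
    unfolding F_def using t e(1) by (intro tendsto_intros lim_\<omega> lim_z) simp_all
  then have lim_bound: "((\<lambda>b. b / e^2 * (cmod (F b))^2) \<longlongrightarrow> 0) (at_right 0)" by simp
  have "eventually (\<lambda>b. Im (\<omega> (z b)) \<le> b / e^2 * (cmod (F b))^2) (at_right 0)"
    using eventually_at_right_less[of "0::real"] by eventually_elim (rule bound)
  then show ?thesis
    by (rule tendsto_le[OF trivial_limit_at_right_real lim_bound tendsto_Im[OF lim_\<omega>]])
qed

lemma real_outside_support:
  assumes "x \<notin> msupp \<nu>"
  shows "\<omega> (of_real x) \<in> \<real>"
proof -
  have "Im (complex_of_real x) \<le> Im (\<omega> (of_real x))"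
    by (rule Im_le_closed_UHP) (simp add: UHP_Un_Reals)
  then show ?thesis
    using Im_nonpos_outside_support[OF assms] by (simp add: complex_is_Real_iff)
qed

definition reflected :: "complex \<Rightarrow> complex" where
  "reflected z = (if 0 \<le> Im z then \<omega> z else cnj (\<omega> (cnj z)))"

lemma open_outside_support: "open (- complex_of_real ` msupp \<nu>)"
proof -
  have "closed (complex_of_real ` msupp \<nu>)"
    by (rule closed_injective_linear_image[OF closed_msupp[OF nu_sets] linear_of_real])
      (simp add: inj_def)
  then show ?thesis by (rule open_Compl)
qed

lemma reflected_holomorphic: "reflected holomorphic_on (- complex_of_real ` msupp \<nu>)"
  unfolding reflected_def
proof (rule Schwarz_reflection[OF open_outside_support])
  have "cnj ` (- complex_of_real ` msupp \<nu>) = - (cnj ` complex_of_real ` msupp \<nu>)"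
    by (simp add: image_cnj_conv_vimage_cnj vimage_Compl)
  also have "cnj ` complex_of_real ` msupp \<nu> = complex_of_real ` msupp \<nu>"
    by (simp add: image_image)
  finally show "cnj ` (- complex_of_real ` msupp \<nu>) \<subseteq> - complex_of_real ` msupp \<nu>"
    by simp
  show "\<omega> holomorphic_on (- complex_of_real ` msupp \<nu> \<inter> {z. 0 < Im z})"
    by (rule holomorphic_on_subset[OF hol]) (auto simp: UHP_def)
  show "continuous_on (- complex_of_real ` msupp \<nu> \<inter> {z. 0 \<le> Im z}) \<omega>"
    by (rule continuous_on_subset[OF cont]) (auto simp: UHP_Un_Reals)
  fix z :: complex assume z: "z \<in> - complex_of_real ` msupp \<nu>" "z \<in> \<real>"
  then obtain x where "z = of_real x" by (auto elim: Reals_cases)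
  then show "\<omega> z \<in> \<real>"
    using z(1) real_outside_support[of x] by auto
qed

lemma Im_reflected_nonneg_iff: "0 \<le> Im (reflected z) \<longleftrightarrow> 0 \<le> Im z"
proof (cases "0 \<le> Im z")
  case True
  then show ?thesis
    using Im_le_closed_UHP[of z] by (simp add: reflected_def UHP_Un_Reals)
next
  case False
  then show ?thesis
    using Im_le_closed_UHP[of "cnj z"] by (simp add: reflected_def UHP_Un_Reals)
qed

lemma inj_reflected: "inj reflected"
proof (rule injI)
  fix z1 z2 assume eq: "reflected z1 = reflected z2"
  then have "0 \<le> Im z1 \<longleftrightarrow> 0 \<le> Im z2"
    using Im_reflected_nonneg_iff[of z1] Im_reflected_nonneg_iff[of z2] by simp
  then consider "0 \<le> Im z1" "0 \<le> Im z2" | "Im z1 < 0" "Im z2 < 0"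
    by linarith
  then show "z1 = z2"
  proof cases
    case 1
    then have "\<omega> z1 = \<omega> z2" using eq by (simp add: reflected_def)
    from inj_onD[OF inj_on_closed_UHP this] 1 show ?thesis by (simp add: UHP_Un_Reals)
  next
    case 2
    then have "\<omega> (cnj z1) = \<omega> (cnj z2)" using eq by (simp add: reflected_def)
    from inj_onD[OF inj_on_closed_UHP this] 2 show ?thesis by (simp add: UHP_Un_Reals)
  qed
qed

end

theorem proposition3p4:
  fixes \<mu> \<nu> :: "real measure" and n_ac n_pp n_out :: nat and t :: real
    and \<omega> :: "complex \<Rightarrow> complex"
  assumes A: "assumption_A \<mu> n_ac n_pp n_out"
    and t: "t > 1"
    and hol: "\<omega> holomorphic_on UHP"
    and maps: "\<forall>z\<in>UHP. Im (\<omega> z) \<ge> Im z"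
    and asym: "((\<lambda>\<eta>::real. \<omega> (\<i> * of_real \<eta>) / (\<i> * of_real \<eta>)) \<longlongrightarrow> 1) at_top"
    and subord: "\<forall>z\<in>UHP. of_real t * \<omega> z - z = of_real (t - 1) * Ftrans \<mu> (\<omega> z)"
    and ext: "continuous_on (UHP \<union> \<real>) \<omega>"
    and nu_prob: "prob_space \<nu>" and nu_sets: "sets \<nu> = sets borel"
    and nu_F: "\<forall>z\<in>UHP. Ftrans \<nu> z = Ftrans \<mu> (\<omega> z)"
  shows "strict_mono (\<lambda>x::real. Re (\<omega> (of_real x))) \<and>
         (\<forall>z\<in>UHP. Re (deriv \<omega> z) \<ge> 1 / 2) \<and>
         (\<exists>g. homeomorphism (UHP \<union> \<real>) (\<omega> ` (UHP \<union> \<real>)) \<omega> g) \<and>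
         (\<exists>U g h. open U \<and> (UHP \<union> \<real>) - of_real ` msupp \<nu> \<subseteq> U \<and>
           g holomorphic_on U \<and> (\<forall>z\<in>(UHP \<union> \<real>) - of_real ` msupp \<nu>. g z = \<omega> z) \<and>
           inj_on g U \<and> open (g ` U) \<and> h holomorphic_on (g ` U) \<and> (\<forall>z\<in>U. h (g z) = z))"
proof -
  have mu: "prob_space \<mu>" "sets \<mu> = sets borel"
    using A by (simp_all add: assumption_A_def)
  interpret subordination \<mu> \<nu> t \<omega>
    using mu t hol maps[rule_format] subord[rule_format] ext nu_prob nu_sets nu_F[rule_format]
    by (rule subordination.intro)
  let ?U = "- complex_of_real ` msupp \<nu>"
  have inj: "inj_on reflected ?U"
    using inj_reflected by (rule inj_on_subset) simp
  obtain h where "h holomorphic_on reflected ` ?U" "\<And>z. z \<in> ?U \<Longrightarrow> h (reflected z) = z"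
    using holomorphic_has_inverse[OF reflected_holomorphic open_outside_support inj] by metis
  moreover have "open (reflected ` ?U)"
    using reflected_holomorphic open_outside_support inj by (rule open_mapping_thm3)
  moreover have "\<forall>z\<in>(UHP \<union> \<real>) - of_real ` msupp \<nu>. reflected z = \<omega> z"
    by (simp add: reflected_def UHP_Un_Reals)
  ultimately show ?thesis
    using strict_mono_Re_real Re_deriv_ge homeomorphism_closed_UHP open_outside_support reflected_holomorphic inj
    by blast
qed

end
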